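(* Let $n\ge 1$ and let $G=P_{n+1}$ be the path $v_1v_2\cdots v_{n+1}$ whose edges $v_iv_{i+1}$ have pairwise distinct weights $w_i\in(0,1)$, $1\le i\le n$. For $1\le i\le n$ let $W_i=\prod_{j\ne i}(w_j-w_i)$. Then for every integer $t\ge n$, \[\Pr\big(\operatorname{ptw}(G,\{v_1\})\le t\big)=w_1w_2\cdots w_n\sum_{i=1}^{n}\frac{(1-w_i)^{n-1}-(1-w_i)^{t}}{w_iW_i},\] and hence, for $\alpha\in(0,1)$, $\operatorname{cptw}(G,\{v_1\},\alpha)$ is the minimum value of $t$ for which this quantity is at least $\alpha$.
   Context: Let $G$ be a finite simple graph in which each edge $uv$ has a weight $w_{uv}\in(0,1)$. Weighted zero forcing: start with a set $B\subseteq V(G)$ of blue vertices, all other vertices white. In each round, simultaneously, for every blue vertex $u$ that has exactly one white neighbor $v$ (with respect to the coloring at the start of the round), $u$ attempts to force $v$, succeeding with probability $w_{uv}$, all attempts being independent; a white vertex becomes blue at the end of the round if at least one attempt on it succeeds. $\operatorname{ptw}(G,B)$ is the random variable giving the round in which the last white vertex becomes blue ($0$ if $B=V(G)$). For $\alpha\in(0,1)$, $\operatorname{cptw}(G,B,\alpha)$ is the least $t\ge 0$ with $\Pr(\operatorname{ptw}(G,B)\le t)\ge\alpha$. *)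

theory Defs
  imports "HOL-Probability.Probability"
begin

text \<open>Weighted zero forcing on a finite simple graph with vertex set V, symmetric
irreflexive edge relation E (assumed to live on V) and edge weights w u v.\<close>

definition force_pairs :: "'a set \<Rightarrow> ('a \<Rightarrow> 'a \<Rightarrow> bool) \<Rightarrow> 'a set \<Rightarrow> ('a \<times> 'a) set" where
  "force_pairs V E B = {(u, v). u \<in> B \<and> v \<in> V \<and> v \<notin> B \<and> E u v \<and>
      (\<forall>x \<in> V. E u x \<and> x \<notin> B \<longrightarrow> x = v)}"

definition round_pmf :: "'a set \<Rightarrow> ('a \<Rightarrow> 'a \<Rightarrow> bool) \<Rightarrow> ('a \<Rightarrow> 'a \<Rightarrow> real) \<Rightarrow> 'a set \<Rightarrow> 'a set pmf" where
  "round_pmf V E w B =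
     map_pmf (\<lambda>s. B \<union> {v. \<exists>u. (u, v) \<in> force_pairs V E B \<and> s (u, v)})
       (Pi_pmf (force_pairs V E B) False (\<lambda>p. bernoulli_pmf (w (fst p) (snd p))))"

primrec blue_after :: "'a set \<Rightarrow> ('a \<Rightarrow> 'a \<Rightarrow> bool) \<Rightarrow> ('a \<Rightarrow> 'a \<Rightarrow> real) \<Rightarrow> 'a set \<Rightarrow> nat \<Rightarrow> 'a set pmf" where
  "blue_after V E w B 0 = return_pmf B"
| "blue_after V E w B (Suc t) = bind_pmf (blue_after V E w B t) (round_pmf V E w)"

text \<open>Pr(ptw(G,B) \<le> t): all vertices are blue at the end of round t.\<close>
definition prob_ptw_le :: "'a set \<Rightarrow> ('a \<Rightarrow> 'a \<Rightarrow> bool) \<Rightarrow> ('a \<Rightarrow> 'a \<Rightarrow> real) \<Rightarrow> 'a set \<Rightarrow> nat \<Rightarrow> real" where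
  "prob_ptw_le V E w B t = measure_pmf.prob (blue_after V E w B t) {S. V \<subseteq> S}"

definition cptw :: "'a set \<Rightarrow> ('a \<Rightarrow> 'a \<Rightarrow> bool) \<Rightarrow> ('a \<Rightarrow> 'a \<Rightarrow> real) \<Rightarrow> 'a set \<Rightarrow> real \<Rightarrow> nat" where
  "cptw V E w B \<alpha> = (LEAST t. prob_ptw_le V E w B t \<ge> \<alpha>)"

definition path_V :: "nat \<Rightarrow> nat set" where "path_V n = {1..n+1}"
definition path_E :: "nat \<Rightarrow> nat \<Rightarrow> bool" where "path_E i j = (j = i + 1 \<or> i = j + 1)"
definition path_w :: "(nat \<Rightarrow> real) \<Rightarrow> nat \<Rightarrow> nat \<Rightarrow> real" where "path_w wt i j = wt (min i j)"

end

theory Submission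
  imports Defs "HOL-Computational_Algebra.Polynomial"
begin

text \<open>Starting from {v_1}, the blue set on a path is always an initial segment {1..k}, and its
  frontier k moves to k+1 in a round with probability w_k, independently of the past. So ptw is a
  sum T_1 + ... + T_n of independent geometric random variables with success probabilities w_i.
  Let H_m(t) be the probability that the frontier is at most m after t rounds; conditioning on the
  last round gives H_m(t+1) = (1 - w_m) H_m(t) + w_m H_(m-1)(t). The closed form
  S_m(r) = sum_i c_(m,i) (1 - w_i)^r satisfies the same recursion, and S_m(0) = 1 because
  sum_i c_(m,i) is the value at 0 of the Lagrange interpolant of the constant 1 at the nodes
  w_1, ..., w_m. Hence H_m = S_m and Pr(ptw <= t) = 1 - S_n(t). The recursion also yields
  S_m(r) = 1 for r < m, which accounts for the term (1 - w_i)^(n-1) in the formula.\<close>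

lemma sum_lagrange_basis_at_0:
  fixes a :: "'b \<Rightarrow> 'a::field"
  assumes inj: "inj_on a I" and fin: "finite I" and ne: "I \<noteq> {}"
  shows "(\<Sum>i\<in>I. \<Prod>j\<in>I-{i}. a j / (a j - a i)) = 1"
proof -
  define p where "p = (\<Sum>i\<in>I. smult (1 / (\<Prod>j\<in>I-{i}. a i - a j)) (\<Prod>j\<in>I-{i}. [:- a j, 1:]))"
  have poly_p: "poly p x = (\<Sum>i\<in>I. (\<Prod>j\<in>I-{i}. x - a j) / (\<Prod>j\<in>I-{i}. a i - a j))" for x
    unfolding p_def by (simp add: poly_sum poly_prod)
  have degree_p: "degree p \<le> card I - 1"
    unfolding p_def
  proof (rule degree_sum_le)
    fix i assume "i \<in> I"
    have "degree (\<Prod>j\<in>I-{i}. [:- a j, 1:]) \<le> (\<Sum>j\<in>I-{i}. degree [:- a j, 1:])"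
      using degree_prod_sum_le[of "I-{i}" "\<lambda>j. [:- a j, 1:]"] fin by (simp add: o_def)
    also have "\<dots> = card I - 1" using \<open>i \<in> I\<close> fin by simp
    finally show "degree (smult (1 / (\<Prod>j\<in>I-{i}. a i - a j)) (\<Prod>j\<in>I-{i}. [:- a j, 1:])) \<le> card I - 1"
      by (meson degree_smult_le order_trans)
  qed (use fin in auto)
  have poly_p_node: "poly p (a k) = 1" if k: "k \<in> I" for k
  proof -
    have "(\<Prod>j\<in>I-{i}. a k - a j) = 0" if "i \<in> I - {k}" for i
      using that k fin by (intro prod_zero) auto
    then have others: "(\<Sum>i\<in>I - {k}. (\<Prod>j\<in>I-{i}. a k - a j) / (\<Prod>j\<in>I-{i}. a i - a j)) = 0"
      by (intro sum.neutral) simp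
    have "(\<Prod>j\<in>I-{k}. a k - a j) \<noteq> 0"
      using fin inj k by (subst prod_zero_iff) (auto simp: inj_on_def)
    then show ?thesis
      unfolding poly_p using k fin others by (simp add: sum.remove[of I k])
  qed
  have "p = 1"
  proof (rule poly_eqI_degree[where A = "a ` I"])
    have "card (a ` I) = card I" "card I > 0"
      using card_image[OF inj] fin ne by auto
    then show "degree p < card (a ` I)" "degree (1::'a poly) < card (a ` I)"
      using degree_p by auto
  qed (use poly_p_node in auto)
  then have "1 = (\<Sum>i\<in>I. (\<Prod>j\<in>I-{i}. 0 - a j) / (\<Prod>j\<in>I-{i}. a i - a j))"
    using poly_p[of 0] by simp
  also have "\<dots> = (\<Sum>i\<in>I. \<Prod>j\<in>I-{i}. a j / (a j - a i))"
    by (intro sum.cong refl) (simp add: prod_dividef[symmetric] minus_divide_right)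
  finally show ?thesis ..
qed

text \<open>S_m(r) = sum_i c_(m,i) (1 - w_i)^r; for probabilities w_i it is Pr(T_1 + ... + T_m > r)
  with T_i independent and geometric with success probability w_i.\<close>

definition geom_sum_coeff :: "(nat \<Rightarrow> 'a::field) \<Rightarrow> nat \<Rightarrow> nat \<Rightarrow> 'a" where
  "geom_sum_coeff w m i = (\<Prod>j=1..m. w j) / (w i * (\<Prod>j\<in>{1..m}-{i}. w j - w i))"

definition geom_sum_tail :: "(nat \<Rightarrow> 'a::field) \<Rightarrow> nat \<Rightarrow> nat \<Rightarrow> 'a" where
  "geom_sum_tail w m r = (\<Sum>i=1..m. geom_sum_coeff w m i * (1 - w i) ^ r)"

lemma geom_sum_tail_0:
  assumes "1 \<le> m" "\<And>i. i \<in> {1..m} \<Longrightarrow> w i \<noteq> 0" "inj_on w {1..m}"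
  shows "geom_sum_tail w m 0 = 1"
proof -
  have "geom_sum_coeff w m i = (\<Prod>j\<in>{1..m}-{i}. w j / (w j - w i))" if i: "i \<in> {1..m}" for i
  proof -
    have "(\<Prod>j=1..m. w j) = w i * (\<Prod>j\<in>{1..m}-{i}. w j)"
      using i by (simp add: prod.remove)
    then show ?thesis
      unfolding geom_sum_coeff_def using assms(2)[OF i] by (simp add: prod_dividef)
  qed
  then have "geom_sum_tail w m 0 = (\<Sum>i\<in>{1..m}. \<Prod>j\<in>{1..m}-{i}. w j / (w j - w i))"
    unfolding geom_sum_tail_def by simp
  also have "\<dots> = 1"
    by (rule sum_lagrange_basis_at_0) (use assms in auto)
  finally show ?thesis .
qed

lemma geom_sum_coeff_Suc:
  assumes "inj_on w {1..Suc m}" "i \<in> {1..m}"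
  shows "geom_sum_coeff w (Suc m) i * (w (Suc m) - w i) = w (Suc m) * geom_sum_coeff w m i"
proof -
  have "w (Suc m) - w i \<noteq> 0"
    using inj_onD[OF assms(1), of "Suc m" i] assms(2) by force
  moreover have "{1..Suc m} - {i} = insert (Suc m) ({1..m} - {i})"
    using assms(2) by auto
  ultimately show ?thesis
    unfolding geom_sum_coeff_def by (simp add: prod.cl_ivl_Suc field_split_simps)
qed

lemma geom_sum_tail_Suc:
  assumes "inj_on w {1..Suc m}"
  shows "geom_sum_tail w (Suc m) (Suc r)
           = (1 - w (Suc m)) * geom_sum_tail w (Suc m) r + w (Suc m) * geom_sum_tail w m r"
proof -
  have "geom_sum_tail w (Suc m) (Suc r) - (1 - w (Suc m)) * geom_sum_tail w (Suc m) r
      = (\<Sum>i=1..Suc m. geom_sum_coeff w (Suc m) i * (w (Suc m) - w i) * (1 - w i) ^ r)"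
    unfolding geom_sum_tail_def
    by (simp add: sum_distrib_left sum_subtractf[symmetric] algebra_simps)
  also have "\<dots> = (\<Sum>i=1..m. geom_sum_coeff w (Suc m) i * (w (Suc m) - w i) * (1 - w i) ^ r)"
    by simp
  also have "\<dots> = w (Suc m) * geom_sum_tail w m r"
    unfolding geom_sum_tail_def sum_distrib_left
    by (intro sum.cong refl) (simp add: geom_sum_coeff_Suc[OF assms])
  finally show ?thesis by (simp add: algebra_simps)
qed

lemma geom_sum_tail_eq_1:
  assumes "\<And>i. i \<in> {1..m} \<Longrightarrow> w i \<noteq> 0" "inj_on w {1..m}" "r < m"
  shows "geom_sum_tail w m r = 1"
  using assms
proof (induction m arbitrary: r)
  case 0
  then show ?case by simp
next
  case (Suc m)
  have "inj_on w {1..m}"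
    using Suc.prems(2) by (rule inj_on_subset) auto
  then have "geom_sum_tail w m r = 1" if "r < m" for r
    using Suc.IH Suc.prems(1) that by simp
  then show ?case
    using Suc.prems geom_sum_tail_0[of "Suc m" w]
    by (induction r) (simp_all add: geom_sum_tail_Suc)
qed

definition frontier_step :: "(nat \<Rightarrow> real) \<Rightarrow> nat \<Rightarrow> nat \<Rightarrow> nat pmf" where
  "frontier_step w n k =
     (if k \<le> n then map_pmf (\<lambda>b. if b then Suc k else k) (bernoulli_pmf (w k)) else return_pmf k)"

primrec frontier_after :: "(nat \<Rightarrow> real) \<Rightarrow> nat \<Rightarrow> nat \<Rightarrow> nat pmf" where
  "frontier_after w n 0 = return_pmf 1"
| "frontier_after w n (Suc t) = bind_pmf (frontier_after w n t) (frontier_step w n)"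

lemma force_pairs_path_prefix:
  assumes "1 \<le> k" "k \<le> Suc n"
  shows "force_pairs (path_V n) path_E {1..k} = (if k \<le> n then {(k, Suc k)} else {})"
  using assms unfolding force_pairs_def path_V_def path_E_def by auto

lemma round_pmf_path_prefix:
  assumes "1 \<le> k" "k \<le> Suc n"
  shows "round_pmf (path_V n) path_E (path_w w) {1..k} = map_pmf (\<lambda>k. {1..k}) (frontier_step w n k)"
  unfolding round_pmf_def force_pairs_path_prefix[OF assms] frontier_step_def
  by (auto simp: Pi_pmf_singleton pmf.map_comp o_def path_w_def intro!: map_pmf_cong split: if_splits)

lemma set_pmf_frontier_after: "set_pmf (frontier_after w n t) \<subseteq> {1..Suc n}"
  by (induction t) (auto simp: frontier_step_def split: if_splits)

lemma blue_after_path: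
  "blue_after (path_V n) path_E (path_w w) {1} t = map_pmf (\<lambda>k. {1..k}) (frontier_after w n t)"
proof (induction t)
  case 0
  then show ?case by simp
next
  case (Suc t)
  have "blue_after (path_V n) path_E (path_w w) {1} (Suc t)
      = bind_pmf (frontier_after w n t) (\<lambda>k. round_pmf (path_V n) path_E (path_w w) {1..k})"
    by (simp only: blue_after.simps Suc.IH bind_map_pmf)
  also have "\<dots> = bind_pmf (frontier_after w n t) (\<lambda>k. map_pmf (\<lambda>k. {1..k}) (frontier_step w n k))"
    using set_pmf_frontier_after[of w n t] by (intro bind_pmf_cong refl round_pmf_path_prefix) auto
  finally show ?case by (simp add: map_bind_pmf)
qed

lemma measure_bind_pmf:
  "measure_pmf.prob (bind_pmf M f) A = measure_pmf.expectation M (\<lambda>x. measure_pmf.prob (f x) A)"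
  unfolding measure_pmf_bind
  by (rule measure_pmf.measure_bind[where N = "count_space UNIV"])
    (auto simp: measure_pmf_in_subprob_algebra)

lemma prob_frontier_step_le:
  assumes "1 \<le> m" "m \<le> n" "0 \<le> w m" "w m \<le> 1"
  shows "measure_pmf.prob (frontier_step w n k) {..m}
           = (1 - w m) * indicator {..m} k + w m * indicator {..m-1} k"
proof -
  consider "k < m" | "k = m" | "m < k \<and> k \<le> n" | "n < k" by linarith
  then show ?thesis
  proof cases
    case 2
    then have "(\<lambda>b. if b then Suc k else k) -` {..m} = {False}" by auto
    then show ?thesis
      using 2 assms unfolding frontier_step_def by (simp add: measure_pmf_single)
  qed (use assms in \<open>auto simp: frontier_step_def vimage_def split: if_splits\<close>)
qed

lemma prob_frontier_after_Suc_le: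
  assumes "1 \<le> m" "m \<le> n" "0 \<le> w m" "w m \<le> 1"
  shows "measure_pmf.prob (frontier_after w n (Suc t)) {..m}
           = (1 - w m) * measure_pmf.prob (frontier_after w n t) {..m}
             + w m * measure_pmf.prob (frontier_after w n t) {..m-1}"
proof -
  have "finite (set_pmf (frontier_after w n t))"
    using set_pmf_frontier_after by (rule finite_subset) simp
  then show ?thesis
    by (simp add: measure_bind_pmf prob_frontier_step_le[of m n w, OF assms] integrable_measure_pmf_finite)
qed

lemma prob_frontier_after_le:
  assumes "m \<le> n" "\<And>i. i \<in> {1..n} \<Longrightarrow> 0 < w i \<and> w i < 1" "inj_on w {1..n}"
  shows "measure_pmf.prob (frontier_after w n t) {..m} = geom_sum_tail w m t"
  using assms(1)
proof (induction m arbitrary: t)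
  case 0
  have "set_pmf (frontier_after w n t) \<inter> {..0} = {}"
    using set_pmf_frontier_after[of w n t] by auto
  then show ?case
    by (simp add: geom_sum_tail_def measure_pmf_zero_iff)
next
  case (Suc m)
  have w_pos: "\<And>i. i \<in> {1..Suc m} \<Longrightarrow> w i \<noteq> 0" and w_prob: "0 \<le> w (Suc m)" "w (Suc m) \<le> 1"
    using assms(2) Suc.prems by force+
  have inj: "inj_on w {1..Suc m}"
    using assms(3) Suc.prems by (auto intro: inj_on_subset)
  have prob_le_m: "measure_pmf.prob (frontier_after w n t) {..m} = geom_sum_tail w m t" for t
    using Suc by simp
  show ?case
  proof (induction t)
    case 0
    have "geom_sum_tail w (Suc m) 0 = 1"
      by (rule geom_sum_tail_0) (use w_pos inj in auto)
    then show ?case by simp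
  next
    case (Suc t)
    then show ?case
      using prob_frontier_after_Suc_le[of "Suc m" n w t] \<open>Suc m \<le> n\<close> w_prob prob_le_m
      by (simp add: geom_sum_tail_Suc[OF inj])
  qed
qed

lemma prob_ptw_le_path:
  assumes "\<And>i. i \<in> {1..n} \<Longrightarrow> 0 < w i \<and> w i < 1" "inj_on w {1..n}"
  shows "prob_ptw_le (path_V n) path_E (path_w w) {1} t = 1 - geom_sum_tail w n t"
proof -
  have "(\<lambda>k. {1..k}) -` {S. path_V n \<subseteq> S} = - {..n}"
    unfolding path_V_def by auto
  then have "prob_ptw_le (path_V n) path_E (path_w w) {1} t
      = measure_pmf.prob (frontier_after w n t) (- {..n})"
    unfolding prob_ptw_le_def blue_after_path by simp
  also have "\<dots> = 1 - geom_sum_tail w n t"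
    using measure_pmf.prob_compl[of "{..n}" "frontier_after w n t"]
      prob_frontier_after_le[OF order.refl assms] by (simp add: Compl_eq_Diff_UNIV)
  finally show ?thesis .
qed

theorem mainTheorem11:
  fixes n :: nat and wt :: "nat \<Rightarrow> real"
  assumes "n \<ge> 1"
    and "\<And>i. i \<in> {1..n} \<Longrightarrow> 0 < wt i \<and> wt i < 1"
    and "inj_on wt {1..n}"
  defines "W \<equiv> (\<lambda>i. \<Prod>j\<in>{1..n} - {i}. wt j - wt i)"
  defines "F \<equiv> (\<lambda>t::nat. (\<Prod>i=1..n. wt i) *
              (\<Sum>i=1..n. ((1 - wt i) ^ (n - 1) - (1 - wt i) ^ t) / (wt i * W i)))"
  shows "(\<forall>t \<ge> n. prob_ptw_le (path_V n) path_E (path_w wt) {1} t = F t) \<and>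
         (\<forall>\<alpha>::real. 0 < \<alpha> \<and> \<alpha> < 1 \<longrightarrow>
            cptw (path_V n) path_E (path_w wt) {1} \<alpha> = (LEAST t. n \<le> t \<and> F t \<ge> \<alpha>))"
proof -
  let ?P = "prob_ptw_le (path_V n) path_E (path_w wt) {1}"
  have tail_eq_1: "geom_sum_tail wt n t = 1" if "t < n" for t
    using assms(2,3) that by (intro geom_sum_tail_eq_1) force+
  have "F t = geom_sum_tail wt n (n - 1) - geom_sum_tail wt n t" for t
    unfolding F_def W_def geom_sum_tail_def geom_sum_coeff_def sum_distrib_left
      sum_subtractf[symmetric]
    by (intro sum.cong refl) (simp add: diff_divide_distrib right_diff_distrib)
  then have F_eq: "F t = ?P t" for t
    using tail_eq_1[of "n - 1"] assms(1) prob_ptw_le_path[OF assms(2,3)] by simp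
  have "?P t = 0" if "t < n" for t
    using prob_ptw_le_path[OF assms(2,3)] tail_eq_1[OF that] by simp
  then have "\<alpha> \<le> ?P t \<longleftrightarrow> n \<le> t \<and> \<alpha> \<le> F t" if "0 < \<alpha>" for \<alpha> t
    using that F_eq by (cases "n \<le> t") auto
  then show ?thesis
    unfolding cptw_def using F_eq by simp
qed

end
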